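(* Let $G$ be a finite graph with a self-loop on every vertex, let $v$ be a vertex of $G$, and let $w_i\neq w_j$ be two distinct neighbours of $v$ (both different from $v$). Let $C_v$ be the number of vertex-disjoint directed cycle covers of $G$ in which $v$ lies on a cycle of length 1 (equivalently $C_v=C(G-\{v\})$), and let $C_{w_ivw_j}$ be the number of vertex-disjoint directed cycle covers of $G$ containing the directed edges $w_i\to v$ and $v\to w_j$. Then $$\left(C_{w_ivw_j}\right)^2\le \frac14\left(C_v\right)^2.$$
   Context: A vertex-disjoint directed cycle cover of a finite graph $H$ (with a self-loop at every vertex) is a collection of vertex-disjoint directed cycles covering all vertices, where cycles of every positive length are allowed: length 1 means a vertex with its loop, and length 2 means two adjacent vertices using their edge in both directions. Equivalently it is a permutation $\sigma$ of the vertices with $\sigma(u)=u$ or $\sigma(u)$ adjacent to $u$ for all $u$; it contains the directed edge $x\to y$ iff $\sigma(x)=y$. $C(H)$ denotes the number of such covers, and $G-\{v\}$ is $G$ with $v$ deleted. *)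

theory Defs
  imports "HOL-Analysis.Analysis"
begin

text \<open>A finite graph on vertex set V with symmetric adjacency relation E; every vertex
carries a self-loop (modelled by allowing fixed points).\<close>

definition cycle_covers :: "'a set \<Rightarrow> ('a \<Rightarrow> 'a \<Rightarrow> bool) \<Rightarrow> ('a \<Rightarrow> 'a) set" where
  "cycle_covers V E = {\<sigma>. \<sigma> permutes V \<and> (\<forall>u\<in>V. \<sigma> u = u \<or> E u (\<sigma> u))}"

end

theory Submission
  imports Defs "HOL-Combinatorics.Orbits"
begin

text \<open>Write \<open>b = w\<^sub>i\<close> and \<open>a = w\<^sub>j\<close>. Inverting covers gives \<open>C\<^sub>b\<^sub>v\<^sub>a = C\<^sub>a\<^sub>v\<^sub>b\<close>, and
\<open>C\<^sub>v = C' + C''\<close> where \<open>C'\<close> and \<open>C''\<close> count the covers fixing \<open>v\<close> in which \<open>a\<close> is,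
resp. is not, fixed. By AM-GM it therefore suffices to inject pairs \<open>(\<sigma>, \<sigma>')\<close> of covers through
\<open>b \<rightarrow> v \<rightarrow> a\<close> and \<open>a \<rightarrow> v \<rightarrow> b\<close> into pairs counted by \<open>C'\<close> and \<open>C''\<close>.

Bypassing \<open>v\<close> gives permutations \<open>p = \<sigma> \<circ> (b v)\<close> and \<open>q = \<sigma>' \<circ> (a v)\<close> fixing \<open>v\<close> that use
only loops and edges of the graph, except for the non-edges \<open>b \<rightarrow> a\<close> of \<open>p\<close> and \<open>a \<rightarrow> b\<close>
of \<open>q\<close>. On any orbit \<open>S\<close> of \<open>q\<^sup>-\<^sup>1 \<circ> p\<close> we have \<open>p S = q S\<close>, so exchanging \<open>p\<close> and \<open>q\<close>
on \<open>S\<close> yields two permutations again, and exchanging once more on the same orbit undoes it.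
Take \<open>S\<close> the orbit of \<open>b\<close>. If \<open>a \<notin> S\<close>, both non-edges move into the second permutation,
where they form the 2-cycle \<open>(a b)\<close>; composing with \<open>(a b)\<close> turns it into two loops.
If \<open>a \<in> S\<close>, replacing \<open>q\<close> by \<open>q \<circ> (a b)\<close> first splits that orbit and separates \<open>a\<close>
from \<open>b\<close>.\<close>

lemma bij_override_on:
  assumes "bij p" "bij q" "p ` S = q ` S"
  shows "bij (override_on p q S)"
proof (rule bijI)
  have "q x \<noteq> p y" if "x \<in> S" "y \<notin> S" for x y
    using that assms by (metis bij_def image_iff inj_image_mem_iff)
  then show "inj (override_on p q S)"
    using assms by (auto simp: override_on_def inj_def bij_def) metis
  have "y \<in> range (override_on p q S)" for y
  proof (cases "inv p y \<in> S")
    case True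
    have "y = p (inv p y)" using assms(1) by (simp add: bij_is_surj surj_f_inv_f)
    then have "y \<in> q ` S" using True assms(3) by (metis image_eqI)
    then show ?thesis by (auto simp: override_on_def)
  next
    case False
    then show ?thesis
      using assms by (metis override_on_apply_notin bij_is_surj surj_f_inv_f rangeI)
  qed
  then show "surj (override_on p q S)" by auto
qed

lemma override_on_permutes:
  assumes "p permutes V" "q permutes V" "p ` S = q ` S"
  shows "override_on p q S permutes V"
proof -
  have "bij (override_on p q S)"
    using assms by (intro bij_override_on) (auto simp: permutes_bij)
  then show ?thesis
    using assms by (auto simp: permutes_def bij_iff override_on_def)
qed

lemma image_orbit_inv_comp:
  assumes "permutation p" "permutation q"
  shows "p ` orbit (inv q \<circ> p) x = q ` orbit (inv q \<circ> p) x"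
proof -
  define \<rho> where "\<rho> = inv q \<circ> p"
  have perm: "permutation \<rho>" using assms by (simp add: \<rho>_def permutation_compose permutation_inverse)
  have "\<rho> ` orbit \<rho> x = orbit \<rho> (\<rho> x)"
    by (rule orbit_inverse) (auto intro: permutation_self_in_orbit[OF perm])
  also have "\<dots> = orbit \<rho> x" by (rule permutation_orbit_step[OF perm])
  finally have "\<rho> ` orbit \<rho> x = orbit \<rho> x" .
  moreover have "p = q \<circ> \<rho>"
    using surj_f_inv_f[OF bij_is_surj[OF permutation_bijective[OF assms(2)]]]
    by (simp add: \<rho>_def fun_eq_iff)
  ultimately show ?thesis by (metis \<rho>_def image_comp)
qed

lemma orbit_override_on:
  fixes p q :: "'a \<Rightarrow> 'a" and x :: 'a
  assumes "permutation p" "permutation q"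
  defines "S \<equiv> orbit (inv q \<circ> p) x"
  shows "orbit (inv (override_on q p S) \<circ> override_on p q S) x = S"
proof -
  define \<rho> where "\<rho> = inv q \<circ> p"
  have perm: "permutation \<rho>" using assms by (simp add: \<rho>_def permutation_compose permutation_inverse)
  have S_inv: "S = orbit (inv \<rho>) x"
    unfolding S_def \<rho>_def[symmetric] using orbit_inv_eq[OF perm] by simp
  have bij: "bij p" "bij q" "bij (override_on q p S)"
    using assms image_orbit_inv_comp[OF assms(1,2)] by (auto intro!: bij_override_on simp: permutation_bijective)
  have "(inv (override_on q p S) \<circ> override_on p q S) y = inv \<rho> y" if "y \<in> S" for y
  proof -
    have in_S: "inv \<rho> y \<in> S" using that by (simp add: S_inv orbit.step)
    have "inv \<rho> y = inv p (q y)"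
      using bij by (simp add: \<rho>_def o_inv_distrib bij_imp_bij_inv inv_inv_eq)
    then have "override_on q p S (inv \<rho> y) = q y"
      using in_S bij(1) by (simp add: bij_is_surj surj_f_inv_f)
    then have "inv (override_on q p S) (q y) = inv \<rho> y" using bij(3) by (metis bij_inv_eq_iff)
    then show ?thesis using that by simp
  qed
  then have "orbit (inv (override_on q p S) \<circ> override_on p q S) x = orbit (inv \<rho>) x"
    by (intro orbit_cong) (auto simp: S_inv permutation_self_in_orbit permutation_inverse perm)
  then show ?thesis by (simp add: S_inv)
qed

lemma notin_orbit_transpose_comp:
  assumes "a \<in> orbit f b" "a \<noteq> b"
  shows "a \<notin> orbit (Transposition.transpose a b \<circ> f) b"
proof -
  define n where "n = funpow_dist f b a"
  define X where "X = (\<lambda>k. (f ^^ k) b) ` {..<n}"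
  have distinct: "(f ^^ i) b \<noteq> (f ^^ j) b" if "i \<le> n" "j \<le> n" "i \<noteq> j" for i j
    using funpow_neq_less_funpow_dist[OF assms(1)] that by (simp add: n_def)
  have fn: "(f ^^ n) b = a" using assms(1) by (simp add: n_def funpow_dist_prop)
  have n_pos: "0 < n" using fn assms(2) by (cases n) auto
  have b_in: "b \<in> X" using n_pos by (auto simp: X_def intro!: image_eqI[of b _ 0])
  have closed: "(Transposition.transpose a b \<circ> f) y \<in> X" if "y \<in> X" for y
  proof -
    obtain k where k: "k < n" "y = (f ^^ k) b" using \<open>y \<in> X\<close> by (auto simp: X_def)
    show ?thesis
    proof (cases "Suc k = n")
      case True
      then have "(f ^^ Suc k) b = a" using fn by simp
      then show ?thesis using k b_in by simp
    next
      case False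
      then have "(f ^^ Suc k) b \<noteq> a" "(f ^^ Suc k) b \<noteq> b"
        using distinct[of "Suc k" n] distinct[of "Suc k" 0] k fn by auto
      then show ?thesis using k False by (auto simp: X_def intro!: image_eqI[of _ _ "Suc k"])
    qed
  qed
  have "orbit (Transposition.transpose a b \<circ> f) b \<subseteq> X"
  proof
    fix y assume "y \<in> orbit (Transposition.transpose a b \<circ> f) b"
    then show "y \<in> X"
      by induction (use closed b_in in auto)
  qed
  moreover have "a \<notin> X" using distinct fn by (fastforce simp: X_def)
  ultimately show ?thesis by blast
qed

lemma override_on_mem_cycle_covers:
  assumes "p permutes V" "q permutes V" "p ` S = q ` S"
    and "\<forall>u\<in>V - S. p u = u \<or> E u (p u)" "\<forall>u\<in>V \<inter> S. q u = u \<or> E u (q u)"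
  shows "override_on p q S \<in> cycle_covers V E"
  using override_on_permutes[OF assms(1-3)] assms(4,5)
  by (auto simp: cycle_covers_def override_on_def)

lemma cycle_cover_bypass:
  assumes "\<sigma> \<in> cycle_covers V E" "\<sigma> b = v" "\<sigma> v = a" "b \<in> V" "v \<in> V"
  defines "p \<equiv> \<sigma> \<circ> Transposition.transpose b v"
  shows "p permutes V" "p v = v" "p b = a" "\<forall>u\<in>V - {b}. p u = u \<or> E u (p u)"
proof -
  show "p permutes V"
    using assms by (auto simp: p_def cycle_covers_def intro: permutes_compose permutes_swap_id)
  show "p v = v" "p b = a" using assms(2,3) by (simp_all add: p_def)
  show "\<forall>u\<in>V - {b}. p u = u \<or> E u (p u)"
  proof
    fix u assume "u \<in> V - {b}"
    then show "p u = u \<or> E u (p u)"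
      using assms(1) \<open>p v = v\<close> by (cases "u = v") (auto simp: p_def cycle_covers_def)
  qed
qed

lemma switched_pair_mem_cycle_covers:
  assumes "finite V" "a \<in> V" "b \<in> V" "a \<noteq> b"
    and "p permutes V" "q permutes V" "p v = v" "q v = v" "p b = a"
    and "\<forall>u\<in>V - {b}. p u = u \<or> E u (p u)" "\<forall>u\<in>V - {a}. q u = u \<or> E u (q u)"
    and "q a = b \<or> E b (q a)"
    and "a \<notin> orbit (inv q \<circ> p) b"
  defines "S \<equiv> orbit (inv q \<circ> p) b"
  shows "override_on q p S \<circ> Transposition.transpose a b
           \<in> {\<tau> \<in> cycle_covers V E. \<tau> v = v \<and> \<tau> a = a}"
    and "override_on p q S \<in> {\<tau> \<in> cycle_covers V E. \<tau> v = v \<and> \<tau> a \<noteq> a}"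
proof -
  have perm: "permutation p" "permutation q"
    using assms by (auto simp: permutation_permutes)
  have b_in: "b \<in> S"
    using perm by (simp add: S_def permutation_self_in_orbit permutation_compose permutation_inverse)
  have a_notin: "a \<notin> S" using assms(13) by (simp add: S_def)
  have img: "p ` S = q ` S" using image_orbit_inv_comp[OF perm] by (simp add: S_def)
  have "v \<noteq> a" "v \<noteq> b" using assms(4,5,7,9) by (metis permutes_inj injD)+
  have "p a \<noteq> a" using assms(4,5,9) by (metis permutes_inj injD)
  then show "override_on p q S \<in> {\<tau> \<in> cycle_covers V E. \<tau> v = v \<and> \<tau> a \<noteq> a}"
    using override_on_mem_cycle_covers[OF assms(5,6) img] assms(7,8,10,11) b_in a_notin
    by (auto simp: override_on_def)
  have "override_on q p S permutes V"
    using override_on_permutes[OF assms(6,5)] img by simp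
  then have "override_on q p S \<circ> Transposition.transpose a b permutes V"
    using assms(2,3) by (intro permutes_compose permutes_swap_id)
  moreover have "(override_on q p S \<circ> Transposition.transpose a b) u = u
      \<or> E u ((override_on q p S \<circ> Transposition.transpose a b) u)" if "u \<in> V" for u
  proof -
    consider "u = a" | "u = b" | "u \<noteq> a" "u \<noteq> b" by blast
    then show ?thesis
      using that assms(9-12) b_in a_notin by cases (auto simp: override_on_def)
  qed
  ultimately show "override_on q p S \<circ> Transposition.transpose a b
      \<in> {\<tau> \<in> cycle_covers V E. \<tau> v = v \<and> \<tau> a = a}"
    using assms(7,8,9) b_in a_notin \<open>v \<noteq> a\<close> \<open>v \<noteq> b\<close>
    by (auto simp: cycle_covers_def override_on_def)
qed

definition separating_partner :: "('a \<Rightarrow> 'a) \<Rightarrow> ('a \<Rightarrow> 'a) \<Rightarrow> 'a \<Rightarrow> 'a \<Rightarrow> 'a \<Rightarrow> 'a" where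
  "separating_partner p q a b =
     (if a \<in> orbit (inv q \<circ> p) b then q \<circ> Transposition.transpose a b else q)"

lemma notin_orbit_separating_partner:
  assumes "bij q" "a \<noteq> b"
  shows "a \<notin> orbit (inv (separating_partner p q a b) \<circ> p) b"
proof (cases "a \<in> orbit (inv q \<circ> p) b")
  case True
  have "inv (q \<circ> Transposition.transpose a b) \<circ> p = Transposition.transpose a b \<circ> (inv q \<circ> p)"
    using assms(1) by (simp add: o_inv_distrib comp_assoc)
  then show ?thesis
    using notin_orbit_transpose_comp[OF True assms(2)] True by (simp add: separating_partner_def)
qed (simp add: separating_partner_def)

lemma bypass_comp_transpose:
  assumes "q permutes V" "q v = v" "q a = b" "\<forall>u\<in>V - {a}. q u = u \<or> E u (q u)"
    and "a \<in> V" "b \<in> V" "a \<noteq> v" "b \<noteq> v" "q b \<noteq> b"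
  defines "q' \<equiv> q \<circ> Transposition.transpose a b"
  shows "q' permutes V" "q' v = v" "\<forall>u\<in>V - {a}. q' u = u \<or> E u (q' u)" "E b (q' a)" "q' a \<noteq> b"
proof -
  have other: "q' u = q u" if "u \<noteq> a" "u \<noteq> b" for u
    using that by (simp add: q'_def)
  have "q' b = b" "q' a = q b" using assms(3) by (simp_all add: q'_def)
  show "q' permutes V" using assms(1,5,6) by (simp add: q'_def permutes_compose permutes_swap_id)
  show "q' v = v" using assms(2,7,8) other by simp
  show "\<forall>u\<in>V - {a}. q' u = u \<or> E u (q' u)"
  proof
    fix u assume "u \<in> V - {a}"
    then show "q' u = u \<or> E u (q' u)"
      using assms(4) other \<open>q' b = b\<close> by (cases "u = b") auto
  qed
  show "q' a \<noteq> b" "E b (q' a)" using assms(3,4,6,9) \<open>q' a = q b\<close> by auto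
qed

definition cover_switch ::
    "'a \<Rightarrow> 'a \<Rightarrow> 'a \<Rightarrow> ('a \<Rightarrow> 'a) \<times> ('a \<Rightarrow> 'a) \<Rightarrow> ('a \<Rightarrow> 'a) \<times> ('a \<Rightarrow> 'a)" where
  "cover_switch v a b = (\<lambda>(\<sigma>, \<sigma>').
     let p = \<sigma> \<circ> Transposition.transpose b v;
         q = separating_partner p (\<sigma>' \<circ> Transposition.transpose a v) a b;
         S = orbit (inv q \<circ> p) b
     in (override_on q p S \<circ> Transposition.transpose a b, override_on p q S))"

text \<open>The test \<open>\<tau>' b = b\<close> recovers which choice \<^const>\<open>separating_partner\<close> made.\<close>

definition cover_unswitch ::
    "'a \<Rightarrow> 'a \<Rightarrow> 'a \<Rightarrow> ('a \<Rightarrow> 'a) \<times> ('a \<Rightarrow> 'a) \<Rightarrow> ('a \<Rightarrow> 'a) \<times> ('a \<Rightarrow> 'a)" where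
  "cover_unswitch v a b = (\<lambda>(\<tau>', \<tau>).
     let q' = \<tau>' \<circ> Transposition.transpose a b;
         S = orbit (inv q' \<circ> \<tau>) b;
         q = override_on q' \<tau> S
     in (override_on \<tau> q' S \<circ> Transposition.transpose b v,
         (if \<tau>' b = b then q else q \<circ> Transposition.transpose a b) \<circ> Transposition.transpose a v))"

lemma cover_switch_cases:
  assumes "v \<in> V" "a \<in> V" "b \<in> V" "a \<noteq> v" "b \<noteq> v" "a \<noteq> b"
    and \<sigma>: "\<sigma> \<in> cycle_covers V E" "\<sigma> b = v" "\<sigma> v = a"
    and \<sigma>': "\<sigma>' \<in> cycle_covers V E" "\<sigma>' a = v" "\<sigma>' v = b"
  obtains p q where
    "cover_switch v a b (\<sigma>, \<sigma>') =
       (override_on q p (orbit (inv q \<circ> p) b) \<circ> Transposition.transpose a b,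
        override_on p q (orbit (inv q \<circ> p) b))"
    and "p permutes V" "q permutes V" "p v = v" "q v = v" "p b = a"
    and "\<forall>u\<in>V - {b}. p u = u \<or> E u (p u)" "\<forall>u\<in>V - {a}. q u = u \<or> E u (q u)"
    and "q a = b \<or> E b (q a)" "a \<notin> orbit (inv q \<circ> p) b"
    and "\<sigma> = p \<circ> Transposition.transpose b v"
    and "\<sigma>' = (if q a = b then q else q \<circ> Transposition.transpose a b) \<circ> Transposition.transpose a v"
proof -
  define p where "p = \<sigma> \<circ> Transposition.transpose b v"
  define q0 where "q0 = \<sigma>' \<circ> Transposition.transpose a v"
  define q where "q = separating_partner p q0 a b"
  note p = cycle_cover_bypass[OF \<sigma> assms(3,1), folded p_def]
  note q0 = cycle_cover_bypass[OF \<sigma>' assms(2,1), folded q0_def]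
  have "q0 b \<noteq> b"
  proof -
    have "\<sigma>' permutes V" using \<sigma>'(1) by (simp add: cycle_covers_def)
    then have "\<sigma>' b \<noteq> \<sigma>' v" using assms(5) by (metis permutes_inj injD)
    then show ?thesis using \<sigma>'(3) assms(5,6) by (simp add: q0_def)
  qed
  have notin: "a \<notin> orbit (inv q \<circ> p) b"
    unfolding q_def using q0(1) assms(6) by (intro notin_orbit_separating_partner permutes_bij)
  have \<sigma>_eq: "\<sigma> = p \<circ> Transposition.transpose b v" "\<sigma>' = q0 \<circ> Transposition.transpose a v"
    by (simp_all add: p_def q0_def comp_assoc)
  have eq: "cover_switch v a b (\<sigma>, \<sigma>') =
       (override_on q p (orbit (inv q \<circ> p) b) \<circ> Transposition.transpose a b,
        override_on p q (orbit (inv q \<circ> p) b))"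
    by (simp add: cover_switch_def Let_def p_def q0_def q_def)
  show ?thesis
  proof (cases "a \<in> orbit (inv q0 \<circ> p) b")
    case True
    then have q: "q = q0 \<circ> Transposition.transpose a b" by (simp add: q_def separating_partner_def)
    note q_props = bypass_comp_transpose[where q = q0 and E = E, OF q0 assms(2-5) \<open>q0 b \<noteq> b\<close>,
        folded q]
    have "\<sigma>' = (if q a = b then q else q \<circ> Transposition.transpose a b) \<circ> Transposition.transpose a v"
      using q_props(5) by (simp add: \<sigma>_eq(2) q comp_assoc)
    with q_props p notin \<sigma>_eq(1) show ?thesis by (intro that[OF eq]) simp_all
  next
    case False
    then have "q = q0" by (simp add: q_def separating_partner_def)
    then show ?thesis using p q0 notin \<sigma>_eq by (intro that[OF eq]) simp_all
  qed
qed

lemma cover_switch_mem: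
  assumes "finite V" "v \<in> V" "a \<in> V" "b \<in> V" "a \<noteq> v" "b \<noteq> v" "a \<noteq> b"
    and "\<sigma> \<in> cycle_covers V E" "\<sigma> b = v" "\<sigma> v = a"
    and "\<sigma>' \<in> cycle_covers V E" "\<sigma>' a = v" "\<sigma>' v = b"
  shows "cover_switch v a b (\<sigma>, \<sigma>') \<in>
           {\<tau> \<in> cycle_covers V E. \<tau> v = v \<and> \<tau> a = a} \<times> {\<tau> \<in> cycle_covers V E. \<tau> v = v \<and> \<tau> a \<noteq> a}"
proof -
  obtain p q where eq: "cover_switch v a b (\<sigma>, \<sigma>') =
       (override_on q p (orbit (inv q \<circ> p) b) \<circ> Transposition.transpose a b,
        override_on p q (orbit (inv q \<circ> p) b))"
    and pq: "p permutes V" "q permutes V" "p v = v" "q v = v" "p b = a"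
      "\<forall>u\<in>V - {b}. p u = u \<or> E u (p u)" "\<forall>u\<in>V - {a}. q u = u \<or> E u (q u)"
      "q a = b \<or> E b (q a)" "a \<notin> orbit (inv q \<circ> p) b"
    using cover_switch_cases[OF assms(2-)] .
  show ?thesis
    unfolding eq using switched_pair_mem_cycle_covers[OF assms(1,3,4,7) pq] by simp
qed

lemma cover_unswitch_cover_switch:
  assumes "finite V" "v \<in> V" "a \<in> V" "b \<in> V" "a \<noteq> v" "b \<noteq> v" "a \<noteq> b"
    and "\<sigma> \<in> cycle_covers V E" "\<sigma> b = v" "\<sigma> v = a"
    and "\<sigma>' \<in> cycle_covers V E" "\<sigma>' a = v" "\<sigma>' v = b"
  shows "cover_unswitch v a b (cover_switch v a b (\<sigma>, \<sigma>')) = (\<sigma>, \<sigma>')"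
proof -
  obtain p q where eq: "cover_switch v a b (\<sigma>, \<sigma>') =
       (override_on q p (orbit (inv q \<circ> p) b) \<circ> Transposition.transpose a b,
        override_on p q (orbit (inv q \<circ> p) b))"
    and perm: "p permutes V" "q permutes V"
    and a_notin: "a \<notin> orbit (inv q \<circ> p) b"
    and \<sigma>_eq: "\<sigma> = p \<circ> Transposition.transpose b v"
    and \<sigma>'_eq: "\<sigma>' = (if q a = b then q else q \<circ> Transposition.transpose a b) \<circ> Transposition.transpose a v"
    using cover_switch_cases[OF assms(2-)] by blast
  define S where "S = orbit (inv q \<circ> p) b"
  have "permutation p" "permutation q" using perm assms(1) by (auto simp: permutation_permutes)
  then have "orbit (inv (override_on q p S) \<circ> override_on p q S) b = S"
    unfolding S_def by (rule orbit_override_on)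
  moreover have "override_on (override_on p q S) (override_on q p S) S = p"
    "override_on (override_on q p S) (override_on p q S) S = q"
    by (auto simp: override_on_def)
  moreover have "override_on q p S a = q a" using a_notin by (simp add: S_def)
  ultimately have "cover_unswitch v a b (cover_switch v a b (\<sigma>, \<sigma>')) =
      (p \<circ> Transposition.transpose b v,
       (if q a = b then q else q \<circ> Transposition.transpose a b) \<circ> Transposition.transpose a v)"
    unfolding eq S_def[symmetric] by (simp add: cover_unswitch_def Let_def comp_assoc)
  then show ?thesis using \<sigma>_eq \<sigma>'_eq by simp
qed

lemma finite_cycle_covers: "finite V \<Longrightarrow> finite (cycle_covers V E)"
  using finite_permutations by (rule finite_subset[rotated]) (auto simp: cycle_covers_def)

lemma card_covers_through_mult_le:
  assumes "finite V" "v \<in> V" "a \<in> V" "b \<in> V" "a \<noteq> v" "b \<noteq> v" "a \<noteq> b"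
  shows "card {\<sigma> \<in> cycle_covers V E. \<sigma> b = v \<and> \<sigma> v = a} * card {\<sigma> \<in> cycle_covers V E. \<sigma> a = v \<and> \<sigma> v = b}
    \<le> card {\<tau> \<in> cycle_covers V E. \<tau> v = v \<and> \<tau> a = a} * card {\<tau> \<in> cycle_covers V E. \<tau> v = v \<and> \<tau> a \<noteq> a}"
    (is "card ?A * card ?A' \<le> card ?B1 * card ?B2")
proof -
  have "finite (?B1 \<times> ?B2)" using finite_cycle_covers[OF assms(1)] by simp
  moreover have "inj_on (cover_switch v a b) (?A \<times> ?A')"
  proof (rule inj_on_inverseI[where g = "cover_unswitch v a b"])
    fix x assume "x \<in> ?A \<times> ?A'"
    then obtain \<sigma> \<sigma>' where "x = (\<sigma>, \<sigma>')" "\<sigma> \<in> ?A" "\<sigma>' \<in> ?A'" by blast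
    then show "cover_unswitch v a b (cover_switch v a b x) = x"
      using cover_unswitch_cover_switch[OF assms, of \<sigma> E \<sigma>'] by simp
  qed
  moreover have "cover_switch v a b ` (?A \<times> ?A') \<subseteq> ?B1 \<times> ?B2"
    using cover_switch_mem[OF assms] by blast
  ultimately have "card (?A \<times> ?A') \<le> card (?B1 \<times> ?B2)"
    by (intro card_inj_on_le)
  then show ?thesis by (simp add: card_cartesian_product)
qed

lemma inv_mem_cycle_covers:
  assumes "\<And>x y. E x y \<Longrightarrow> E y x" "\<sigma> \<in> cycle_covers V E"
  shows "inv \<sigma> \<in> cycle_covers V E"
proof -
  have perm: "\<sigma> permutes V" and edge: "\<forall>u\<in>V. \<sigma> u = u \<or> E u (\<sigma> u)"
    using assms(2) by (auto simp: cycle_covers_def)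
  have "inv \<sigma> u = u \<or> E u (inv \<sigma> u)" if "u \<in> V" for u
  proof -
    have "inv \<sigma> u \<in> V" "\<sigma> (inv \<sigma> u) = u"
      using that perm by (simp_all add: permutes_in_image permutes_inv permutes_inverses)
    then show ?thesis using edge assms(1) by metis
  qed
  then show ?thesis using permutes_inv[OF perm] by (simp add: cycle_covers_def)
qed

lemma card_covers_through_reverse:
  assumes "\<And>x y. E x y \<Longrightarrow> E y x"
  shows "card {\<sigma> \<in> cycle_covers V E. \<sigma> a = v \<and> \<sigma> v = b} = card {\<sigma> \<in> cycle_covers V E. \<sigma> b = v \<and> \<sigma> v = a}"
proof (rule bij_betw_same_card[of inv], rule bij_betw_byWitness[where f' = inv])
  have perm: "\<sigma> permutes V" if "\<sigma> \<in> cycle_covers V E" for \<sigma>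
    using that by (simp add: cycle_covers_def)
  show "\<forall>\<sigma>\<in>{\<sigma> \<in> cycle_covers V E. \<sigma> a = v \<and> \<sigma> v = b}. inv (inv \<sigma>) = \<sigma>"
    "\<forall>\<sigma>\<in>{\<sigma> \<in> cycle_covers V E. \<sigma> b = v \<and> \<sigma> v = a}. inv (inv \<sigma>) = \<sigma>"
    by (auto dest: perm simp: permutes_inv_inv)
  show "inv ` {\<sigma> \<in> cycle_covers V E. \<sigma> a = v \<and> \<sigma> v = b} \<subseteq> {\<sigma> \<in> cycle_covers V E. \<sigma> b = v \<and> \<sigma> v = a}"
    "inv ` {\<sigma> \<in> cycle_covers V E. \<sigma> b = v \<and> \<sigma> v = a} \<subseteq> {\<sigma> \<in> cycle_covers V E. \<sigma> a = v \<and> \<sigma> v = b}"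
    using inv_mem_cycle_covers[OF assms] by (auto dest: perm simp: permutes_inv_eq)
qed

theorem lemma4p1:
  fixes V :: "'a set" and E :: "'a \<Rightarrow> 'a \<Rightarrow> bool" and v wi wj :: 'a
  assumes "finite V"
    and "\<And>x y. E x y \<Longrightarrow> E y x"
    and "\<And>x y. E x y \<Longrightarrow> x \<in> V \<and> y \<in> V"
    and "v \<in> V" and "wi \<in> V" and "wj \<in> V"
    and "E v wi" and "E v wj"
    and "wi \<noteq> v" and "wj \<noteq> v" and "wi \<noteq> wj"
  shows "(real (card {\<sigma> \<in> cycle_covers V E. \<sigma> wi = v \<and> \<sigma> v = wj}))\<^sup>2
           \<le> 1/4 * (real (card {\<sigma> \<in> cycle_covers V E. \<sigma> v = v}))\<^sup>2"
proof -
  let ?A = "{\<sigma> \<in> cycle_covers V E. \<sigma> wi = v \<and> \<sigma> v = wj}"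
  let ?fixed = "{\<tau> \<in> cycle_covers V E. \<tau> v = v \<and> \<tau> wj = wj}"
  let ?moved = "{\<tau> \<in> cycle_covers V E. \<tau> v = v \<and> \<tau> wj \<noteq> wj}"
  have split: "card ?fixed + card ?moved = card {\<sigma> \<in> cycle_covers V E. \<sigma> v = v}"
  proof -
    have "card (?fixed \<union> ?moved) = card ?fixed + card ?moved"
      using finite_cycle_covers[OF assms(1)] by (intro card_Un_disjoint) auto
    moreover have "?fixed \<union> ?moved = {\<sigma> \<in> cycle_covers V E. \<sigma> v = v}" by auto
    ultimately show ?thesis by simp
  qed
  have "card {\<sigma> \<in> cycle_covers V E. \<sigma> wj = v \<and> \<sigma> v = wi} = card ?A"
    by (rule card_covers_through_reverse[OF assms(2)])
  then have "card ?A * card ?A \<le> card ?fixed * card ?moved"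
    using card_covers_through_mult_le[OF assms(1,4,6,5,10,9) assms(11)[symmetric], of E]
    by simp
  then have "(real (card ?A))\<^sup>2 \<le> real (card ?fixed) * real (card ?moved)"
    by (simp add: power2_eq_square flip: of_nat_mult)
  also have "\<dots> \<le> 1/4 * (real (card ?fixed) + real (card ?moved))\<^sup>2"
    using zero_le_power2[of "real (card ?fixed) - real (card ?moved)"]
    by (simp add: power2_diff power2_sum)
  also have "\<dots> = 1/4 * (real (card {\<sigma> \<in> cycle_covers V E. \<sigma> v = v}))\<^sup>2"
    unfolding split[symmetric] by simp
  finally show ?thesis .
qed

end
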